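(* Let $(\Theta,\Sigma_\Theta)$ and $(\mathcal Y,\Sigma_{\mathcal Y})$ be Borel spaces, let $\pi$ be a prior probability measure on $\Theta$, and let $\{P_\theta\}_{\theta\in\Theta}$ be probability measures on $\mathcal Y$ (a Markov kernel). Let $X\sim\pi$ be the hidden parameter and $Y$ an observation with $Y\mid X=\theta \sim P_\theta$. Let $\beta:\Theta\to\mathbb R$ be the parameter of interest and $\check\beta:\mathcal Y\to\mathbb R$ any (measurable) estimator. Let $D:\mathbb R_+\to\mathbb R_+$, $\mathbb R_+=[0,\infty)$, satisfy $D(x)\ge D(y)$ whenever $x\ge y$, $D(0)=0$, and $D$ differentiable with derivative $\dot D$. Define the Bayesian error $$\mathsf E \equiv \mathbb E\{D[|\check\beta(Y)-\beta(X)|]\}.$$ For each $t\in\mathbb R_+$, let $\Phi_t,\Phi_t'\in\Sigma_\Theta$, let $\Sigma_t\equiv\{S\cap\Phi_t: S\in\Sigma_\Theta\}$ and $\Sigma_t'\equiv\{S\cap\Phi_t': S\in\Sigma_\Theta\}$ be the restricted $\sigma$-algebras, and let $T_t:\Phi_t\to\Phi_t'$ be a $\Sigma_t/\Sigma_t'$-measurable map such that there exists a measure $\pi_t$ on $(\Phi_t,\Sigma_t)$ satisfying $$\pi = \pi_t T_t^{-1}\quad\text{on }(\Phi_t',\Sigma_t'),$$ and $$\beta(T_t(\theta))\ge \beta(\theta)+t\quad\text{for }\pi_t\text{-almost every }\theta\in\Phi_t.$$ Assume further that both $\pi$ and $\pi_t$ are dominated by a reference measure $\mu$ on $(\Phi_t,\Sigma_t)$,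 with densities $f\equiv d\pi/d\mu$ and $f_t\equiv d\pi_t/d\mu$. Then $$\mathsf E\ge \mathsf Z_1\equiv \frac12\int_0^\infty dt\,\dot D\!\left(\frac t2\right)\mathcal V g_1(t),\qquad g_1(t)\equiv\int_{\Phi_t} d\mu(\theta)\,[f(\theta)+f_t(\theta)]\,\Pi\!\left(\theta,T_t(\theta),\frac{f(\theta)}{f(\theta)+f_t(\theta)}\right),$$ and also $$\mathsf E\ge \mathsf Z_2\equiv \frac12\int_0^\infty dt\,\dot D\!\left(\frac t2\right)\mathcal V g_2(t),\qquad g_2(t)\equiv 2\int_{\Phi_t} d\mu(\theta)\,\min\{f(\theta),f_t(\theta)\}\,\Pi\!\left(\theta,T_t(\theta),0.5\right).$$
   Context: For $\theta,\phi\in\Theta$ and $q\in[0,1]$, $\Pi(\theta,\phi,q)$ denotes the minimum error probability (minimized over all decision rules based on $Y$) for the binary hypothesis-testing problem with hypotheses $\mathcal H_0: Y\sim P_\theta$ and $\mathcal H_1: Y\sim P_\phi$, where $\mathcal H_0$ has prior probability $q$ and $\mathcal H_1$ has prior probability $1-q$. The valley-filling operator $\mathcal V$ acts on a function $g$ on $\mathbb R_+$ by $\mathcal V g(t)\equiv\sup_{t'\ge t} g(t')$. The measure $\pi_t$ need not be a probability measure. $\pi_tT_t^{-1}$ denotes the pushforward of $\pi_t$ under $T_t$. *)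

theory Defs
  imports "HOL-Probability.Probability"
begin

text \<open>Borel space (standard Borel space): measurably isomorphic to a Borel subset of
  the reals (by Kuratowski's theorem equivalent to being isomorphic to a Borel subset
  of a Polish space).\<close>
definition borel_space :: "'a measure \<Rightarrow> bool" where
  "borel_space M \<longleftrightarrow>
     (\<exists>S \<in> sets (borel :: real measure). \<exists>f g.
        f \<in> measurable M (restrict_space borel S) \<and>
        g \<in> measurable (restrict_space borel S) M \<and>
        (\<forall>x\<in>space M. g (f x) = x) \<and> (\<forall>y\<in>S. f (g y) = y))"

text \<open>Minimum error probability of the binary test H0: Y ~ P th (prior q) vs
  H1: Y ~ P ph (prior 1 - q), minimised over all (deterministic) decision rules,
  i.e. measurable acceptance regions A for H1.\<close>
definition min_err_prob ::
  "'b measure \<Rightarrow> ('a \<Rightarrow> 'b measure) \<Rightarrow> 'a \<Rightarrow> 'a \<Rightarrow> real \<Rightarrow> real" where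
  "min_err_prob N P th ph q =
     (INF A \<in> sets N. q * measure (P th) A + (1 - q) * measure (P ph) (space N - A))"

definition valley_fill :: "(real \<Rightarrow> ennreal) \<Rightarrow> real \<Rightarrow> ennreal" where
  "valley_fill g t = (SUP t' \<in> {t..}. g t')"

end

theory Submission
  imports Defs
begin

text \<open>
  By the layer-cake formula, E is one half of the integral over t \<ge> 0 of D'(t/2) F(t), where
  F(t) is the probability that |betac(Y) - beta(X)| \<ge> t/2. Since F is antitone, any g \<le> F
  on [0, \<infinity>) also satisfies V g \<le> F there, so it suffices to bound g1 and g2 by F.
  For fixed t, compare theta with T_t(theta) by the threshold test betac(y) \<ge> beta(theta) + t/2.
  Its error under theta is the upper tail of the estimation error at theta; as
  beta(T_t(theta)) \<ge> beta(theta) + t, its error under T_t(theta) is at most the lower tail at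
  T_t(theta). Weighting the two errors with f and f_t and transporting the second one along T_t
  (where pi_t T_t^-1 = pi) turns the mu-integral into the pi-integral of the upper tail
  over Phi_t plus that of the lower tail over Phi'_t, which is at most F(t).
\<close>

lemma LIMSEQ_right_difference_quotient:
  fixes D D' :: "real \<Rightarrow> real"
  assumes D': "(D has_real_derivative D' x) (at x within {0..})" and x: "0 \<le> x"
  shows "(\<lambda>n. (D (x + 1 / Suc n) - D x) * Suc n) \<longlonglongrightarrow> D' x"
proof -
  have quotient: "((\<lambda>y. (D y - D x) / (y - x)) \<longlongrightarrow> D' x) (at x within {0..})"
    using D' has_field_derivative_iff by blast
  have "(\<lambda>n. x + 1 / real (Suc n)) \<longlonglongrightarrow> x + 0"
    by (intro tendsto_intros LIMSEQ_inverse_real_of_nat[unfolded inverse_eq_divide])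
  moreover have "\<forall>\<^sub>F n in sequentially. x + 1 / real (Suc n) \<in> {0..} - {x}"
    using x by (auto intro!: always_eventually)
  ultimately have "filterlim (\<lambda>n. x + 1 / real (Suc n)) (at x within {0..}) sequentially"
    by (simp add: filterlim_at)
  from filterlim_compose[OF quotient this] show ?thesis
    by simp
qed

lemma has_real_derivative_nonneg_if_mono_on:
  fixes D D' :: "real \<Rightarrow> real"
  assumes "mono_on {0..} D" "(D has_real_derivative D' x) (at x within {0..})" "0 \<le> x"
  shows "0 \<le> D' x"
proof (rule LIMSEQ_le_const[OF LIMSEQ_right_difference_quotient[of D D' x, OF assms(2,3)]], intro exI allI impI)
  fix n :: nat
  have "D x \<le> D (x + 1 / Suc n)"
    by (rule mono_onD[OF assms(1)]) (use assms(3) in auto)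
  then show "0 \<le> (D (x + 1 / Suc n) - D x) * Suc n"
    by simp
qed

lemma continuous_on_abs_if_has_real_derivative:
  fixes D D' :: "real \<Rightarrow> real"
  assumes "\<And>x. 0 \<le> x \<Longrightarrow> (D has_real_derivative D' x) (at x within {0..})"
  shows "continuous_on UNIV (\<lambda>x. D \<bar>x\<bar>)"
proof -
  have "continuous_on {0..} D"
    using assms DERIV_continuous continuous_on_eq_continuous_within by fastforce
  then show ?thesis
    by (rule continuous_on_compose2) (auto intro: continuous_intros)
qed

lemma borel_measurable_derivative_on_nonneg:
  fixes D D' :: "real \<Rightarrow> real"
  assumes D': "\<And>x. 0 \<le> x \<Longrightarrow> (D has_real_derivative D' x) (at x within {0..})"
  shows "(\<lambda>s. ennreal (D' s) * indicator {0..} s) \<in> borel_measurable borel"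
proof -
  have [measurable]: "(\<lambda>x. D \<bar>x\<bar>) \<in> borel_measurable borel"
    using continuous_on_abs_if_has_real_derivative[OF D'] by (rule borel_measurable_continuous_onI)
  have "(\<lambda>x. if 0 \<le> x then D' x else 0) \<in> borel_measurable borel"
  proof (rule borel_measurable_LIMSEQ_real)
    show "(\<lambda>x. if 0 \<le> x then (D \<bar>x + 1 / Suc n\<bar> - D \<bar>x\<bar>) * Suc n else 0) \<in> borel_measurable borel"
      for n :: nat
      by measurable
    show "(\<lambda>n. if 0 \<le> x then (D \<bar>x + 1 / Suc n\<bar> - D \<bar>x\<bar>) * Suc n else 0)
        \<longlonglongrightarrow> (if 0 \<le> x then D' x else 0)" for x
      using LIMSEQ_right_difference_quotient[of D D' x, OF D'] by (cases "0 \<le> x") simp_all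
  qed
  then have "(\<lambda>s. ennreal (if 0 \<le> s then D' s else 0)) \<in> borel_measurable borel"
    by measurable
  then show ?thesis
    by (rule measurable_cong[THEN iffD1, rotated]) (simp add: indicator_def)
qed

lemma nn_integral_derivative_atLeastAtMost:
  fixes D D' :: "real \<Rightarrow> real"
  assumes mono: "mono_on {0..} D"
    and D': "\<And>x. 0 \<le> x \<Longrightarrow> (D has_real_derivative D' x) (at x within {0..})"
    and r: "0 \<le> r"
  shows "(\<integral>\<^sup>+s. ennreal (D' s) * indicator {0..r} s \<partial>lborel) = ennreal (D r - D 0)"
proof (rule nn_integral_has_integral_lebesgue')
  show "0 \<le> D' s" if "s \<in> {0..r}" for s
    using has_real_derivative_nonneg_if_mono_on[of D D' s, OF mono D'] that by auto
  show "(D' has_integral D r - D 0) {0..r}"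
  proof (rule fundamental_theorem_of_calculus[OF r])
    show "(D has_vector_derivative D' s) (at s within {0..r})" if "s \<in> {0..r}" for s
      using has_field_derivative_subset[OF D'] that
      by (auto simp: has_real_derivative_iff_has_vector_derivative)
  qed
qed

lemma nn_integral_layer_cake_derivative:
  fixes D D' :: "real \<Rightarrow> real" and Z :: "'a \<Rightarrow> real"
  assumes M: "sigma_finite_measure M"
    and Z[measurable]: "Z \<in> borel_measurable M" and Z_nonneg: "\<And>x. x \<in> space M \<Longrightarrow> 0 \<le> Z x"
    and mono: "mono_on {0..} D"
    and D': "\<And>x. 0 \<le> x \<Longrightarrow> (D has_real_derivative D' x) (at x within {0..})"
  shows "(\<integral>\<^sup>+x. ennreal (D (Z x) - D 0) \<partial>M)
    = (\<integral>\<^sup>+s\<in>{0..}. ennreal (D' s) * emeasure M {x \<in> space M. s \<le> Z x} \<partial>lborel)"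
proof -
  interpret pair_sigma_finite lborel M
    using M by (simp add: pair_sigma_finite_def lborel.sigma_finite_measure_axioms)
  define H where "H s = ennreal (D' s) * indicator {0..} s" for s
  have [measurable]: "H \<in> borel_measurable borel"
    unfolding H_def by (rule borel_measurable_derivative_on_nonneg[OF D'])
  have "(\<integral>\<^sup>+x. ennreal (D (Z x) - D 0) \<partial>M)
      = (\<integral>\<^sup>+x. (\<integral>\<^sup>+s. H s * indicator {x \<in> space M. s \<le> Z x} x \<partial>lborel) \<partial>M)"
  proof (rule nn_integral_cong)
    fix x assume x: "x \<in> space M"
    have "ennreal (D (Z x) - D 0) = (\<integral>\<^sup>+s. ennreal (D' s) * indicator {0..Z x} s \<partial>lborel)"
      by (rule nn_integral_derivative_atLeastAtMost[OF mono D' Z_nonneg[OF x], symmetric])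
    also have "\<dots> = (\<integral>\<^sup>+s. H s * indicator {x \<in> space M. s \<le> Z x} x \<partial>lborel)"
      by (intro nn_integral_cong) (use x in \<open>auto simp: H_def indicator_def\<close>)
    finally show "ennreal (D (Z x) - D 0) = (\<integral>\<^sup>+s. H s * indicator {x \<in> space M. s \<le> Z x} x \<partial>lborel)" .
  qed
  also have "\<dots> = (\<integral>\<^sup>+s. (\<integral>\<^sup>+x. H s * indicator {x \<in> space M. s \<le> Z x} x \<partial>M) \<partial>lborel)"
    by (rule Fubini') measurable
  also have "\<dots> = (\<integral>\<^sup>+s\<in>{0..}. ennreal (D' s) * emeasure M {x \<in> space M. s \<le> Z x} \<partial>lborel)"
  proof (rule nn_integral_cong)
    fix s
    have "{x \<in> space M. s \<le> Z x} \<in> sets M"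
      by measurable
    then show "(\<integral>\<^sup>+x. H s * indicator {x \<in> space M. s \<le> Z x} x \<partial>M)
        = ennreal (D' s) * emeasure M {x \<in> space M. s \<le> Z x} * indicator {0..} s"
      by (simp add: nn_integral_cmult_indicator) (simp add: H_def mult_ac)
  qed
  finally show ?thesis .
qed

lemma nn_integral_atLeast_0_rescale:
  fixes h :: "real \<Rightarrow> ennreal" and c :: real
  assumes [measurable]: "(\<lambda>s. h s * indicator {0..} s) \<in> borel_measurable borel" and c: "0 < c"
  shows "(\<integral>\<^sup>+s\<in>{0..}. h s \<partial>lborel) = ennreal c * (\<integral>\<^sup>+t\<in>{0..}. h (c * t) \<partial>lborel)"
proof -
  have "indicator {0..} (c * t) = (indicator {0..} t :: ennreal)" for t
    using c by (simp add: indicator_def zero_le_mult_iff)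
  with nn_integral_real_affine[of "\<lambda>s. h s * indicator {0..} s" c 0] c show ?thesis
    by simp
qed

lemma double_nn_integral_le:
  assumes X: "X \<in> borel_measurable M" and le: "AE x in M. w x \<le> X x / 2"
  shows "2 * integral\<^sup>N M w \<le> integral\<^sup>N M X"
proof -
  have "2 * integral\<^sup>N M w \<le> 2 * (\<integral>\<^sup>+x. X x / 2 \<partial>M)"
    using le by (intro mult_left_mono nn_integral_mono_AE) simp_all
  also have "\<dots> = integral\<^sup>N M X"
    by (simp add: nn_integral_divide[OF X] ennreal_times_divide mult.commute[of 2] mult_divide_eq_ennreal)
  finally show ?thesis .
qed

lemma valley_fill_le_antimono:
  assumes "antimono F" and "\<And>s. t \<le> s \<Longrightarrow> g s \<le> F s"
  shows "valley_fill g t \<le> F t"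
  unfolding valley_fill_def
proof (rule SUP_least)
  fix s assume "s \<in> {t..}"
  then show "g s \<le> F t"
    using assms antimonoD[OF assms(1), of t s] by (auto intro: order_trans)
qed

lemma measurable_emeasure_kernel_section:
  assumes K: "K \<in> measurable M (subprob_algebra N)"
    and Q: "Measurable.pred (M \<Otimes>\<^sub>M N) (\<lambda>(x, y). Q x y)"
  shows "(\<lambda>x. emeasure (K x) {y \<in> space N. Q x y}) \<in> borel_measurable M"
proof -
  have "(\<lambda>x. \<integral>\<^sup>+y. indicator {y \<in> space N. Q x y} y \<partial>K x) \<in> borel_measurable M"
    by (rule nn_integral_measurable_subprob_algebra2[OF _ K]) (use Q in measurable)
  then show ?thesis
  proof (rule measurable_cong[THEN iffD1, rotated])
    fix x assume x: "x \<in> space M"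
    have "{y \<in> space N. Q x y} \<in> sets (K x)"
      using Q x unfolding sets_kernel[OF K x] by measurable
    then show "(\<integral>\<^sup>+y. indicator {y \<in> space N. Q x y} y \<partial>K x) = emeasure (K x) {y \<in> space N. Q x y}"
      by simp
  qed
qed

definition error_tail ::
  "'a measure \<Rightarrow> 'b measure \<Rightarrow> ('a \<Rightarrow> 'b measure) \<Rightarrow> ('a \<Rightarrow> real) \<Rightarrow> ('b \<Rightarrow> real) \<Rightarrow> real \<Rightarrow> ennreal"
  where "error_tail M N P beta betac s =
    (\<integral>\<^sup>+th. emeasure (P th) {y \<in> space N. s \<le> \<bar>betac y - beta th\<bar>} \<partial>M)"

lemma measurable_error_tail_integrand:
  fixes pi :: "'a measure" and N :: "'b measure" and P :: "'a \<Rightarrow> 'b measure"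
    and beta :: "'a \<Rightarrow> real" and betac :: "'b \<Rightarrow> real"
  assumes kernel: "P \<in> measurable pi (subprob_algebra N)"
    and [measurable]: "beta \<in> borel_measurable pi" "betac \<in> borel_measurable N"
  shows "(\<lambda>(s, th). emeasure (P th) {y \<in> space N. s \<le> \<bar>betac y - beta th\<bar>})
    \<in> borel_measurable (lborel \<Otimes>\<^sub>M pi)"
proof -
  have "(\<lambda>p. P (snd p)) \<in> measurable (lborel \<Otimes>\<^sub>M pi) (subprob_algebra N)"
    using kernel by measurable
  then show ?thesis
    unfolding case_prod_beta by (rule measurable_emeasure_kernel_section) measurable
qed

lemma borel_measurable_error_tail:
  fixes pi :: "'a measure" and N :: "'b measure" and P :: "'a \<Rightarrow> 'b measure"
    and beta :: "'a \<Rightarrow> real" and betac :: "'b \<Rightarrow> real"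
  assumes "sigma_finite_measure pi" "P \<in> measurable pi (subprob_algebra N)"
    "beta \<in> borel_measurable pi" "betac \<in> borel_measurable N"
  shows "error_tail pi N P beta betac \<in> borel_measurable lborel"
proof -
  interpret sigma_finite_measure pi
    by fact
  show ?thesis
    unfolding error_tail_def[abs_def]
    using measurable_error_tail_integrand[OF assms(2-)] by measurable
qed

lemma antimono_error_tail:
  fixes pi :: "'a measure" and N :: "'b measure" and P :: "'a \<Rightarrow> 'b measure"
    and beta :: "'a \<Rightarrow> real" and betac :: "'b \<Rightarrow> real"
  assumes kernel: "P \<in> measurable pi (subprob_algebra N)"
    and [measurable]: "beta \<in> borel_measurable pi" "betac \<in> borel_measurable N"
  shows "antimono (error_tail pi N P beta betac)"
proof (rule antimonoI)
  fix s s' :: real assume "s \<le> s'"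
  then show "error_tail pi N P beta betac s' \<le> error_tail pi N P beta betac s"
    unfolding error_tail_def
    by (intro nn_integral_mono emeasure_mono) (auto simp: sets_kernel[OF kernel])
qed

lemma bayes_risk_layer_cake:
  fixes pi :: "'a measure" and N :: "'b measure" and P :: "'a \<Rightarrow> 'b measure"
    and beta :: "'a \<Rightarrow> real" and betac :: "'b \<Rightarrow> real" and D D' :: "real \<Rightarrow> real"
  assumes pi: "sigma_finite_measure pi"
    and kernel: "P \<in> measurable pi (subprob_algebra N)"
    and [measurable]: "beta \<in> borel_measurable pi" "betac \<in> borel_measurable N"
    and mono: "mono_on {0..} D"
    and D': "\<And>x. 0 \<le> x \<Longrightarrow> (D has_real_derivative D' x) (at x within {0..})"
  shows "(\<integral>\<^sup>+th. (\<integral>\<^sup>+y. ennreal (D \<bar>betac y - beta th\<bar> - D 0) \<partial>P th) \<partial>pi)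
    = (\<integral>\<^sup>+s\<in>{0..}. ennreal (D' s) * error_tail pi N P beta betac s \<partial>lborel)"
proof -
  interpret pair_sigma_finite lborel pi
    using pi by (simp add: pair_sigma_finite_def lborel.sigma_finite_measure_axioms)
  define H where "H s = ennreal (D' s) * indicator {0..} s" for s
  have [measurable]: "H \<in> borel_measurable borel"
    unfolding H_def by (rule borel_measurable_derivative_on_nonneg[OF D'])
  define G where "G s th = emeasure (P th) {y \<in> space N. s \<le> \<bar>betac y - beta th\<bar>}" for s th
  have G_joint[measurable]: "(\<lambda>(s, th). G s th) \<in> borel_measurable (lborel \<Otimes>\<^sub>M pi)"
    unfolding G_def by (rule measurable_error_tail_integrand[OF kernel]) measurable
  have G_section: "G s \<in> borel_measurable pi" for s
    using measurable_Pair2[OF G_joint, of s] by simp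
  have "(\<integral>\<^sup>+th. (\<integral>\<^sup>+y. ennreal (D \<bar>betac y - beta th\<bar> - D 0) \<partial>P th) \<partial>pi)
      = (\<integral>\<^sup>+th. (\<integral>\<^sup>+s. H s * G s th \<partial>lborel) \<partial>pi)"
  proof (rule nn_integral_cong)
    fix th assume th: "th \<in> space pi"
    have sets_P: "sets (P th) = sets N"
      by (rule sets_kernel[OF kernel th])
    interpret P: subprob_space "P th"
      by (rule subprob_space_kernel[OF kernel th])
    have "(\<lambda>y. \<bar>betac y - beta th\<bar>) \<in> borel_measurable (P th)"
      unfolding measurable_cong_sets[OF sets_P refl] by measurable
    from nn_integral_layer_cake_derivative[OF P.sigma_finite_measure_axioms this _ mono D']
    show "(\<integral>\<^sup>+y. ennreal (D \<bar>betac y - beta th\<bar> - D 0) \<partial>P th) = (\<integral>\<^sup>+s. H s * G s th \<partial>lborel)"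
      by (simp add: G_def H_def sets_eq_imp_space_eq[OF sets_P] mult_ac)
  qed
  also have "\<dots> = (\<integral>\<^sup>+s. (\<integral>\<^sup>+th. H s * G s th \<partial>pi) \<partial>lborel)"
    by (rule Fubini') measurable
  also have "\<dots> = (\<integral>\<^sup>+s\<in>{0..}. ennreal (D' s) * error_tail pi N P beta betac s \<partial>lborel)"
    by (intro nn_integral_cong, subst nn_integral_cmult[OF G_section])
      (simp add: G_def[abs_def] error_tail_def H_def mult_ac)
  finally show ?thesis .
qed

lemma bayes_risk_ge_valley_fill:
  fixes pi :: "'a measure" and N :: "'b measure" and P :: "'a \<Rightarrow> 'b measure"
    and beta :: "'a \<Rightarrow> real" and betac :: "'b \<Rightarrow> real" and D D' :: "real \<Rightarrow> real"
  assumes pi: "sigma_finite_measure pi"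
    and kernel: "P \<in> measurable pi (subprob_algebra N)"
    and beta: "beta \<in> borel_measurable pi" and betac: "betac \<in> borel_measurable N"
    and mono: "mono_on {0..} D"
    and D': "\<And>x. 0 \<le> x \<Longrightarrow> (D has_real_derivative D' x) (at x within {0..})"
    and g_le: "\<And>t. 0 \<le> t \<Longrightarrow> g t \<le> error_tail pi N P beta betac (t/2)"
  shows "(1/2) * (\<integral>\<^sup>+t\<in>{0..}. ennreal (D' (t/2)) * valley_fill g t \<partial>lborel)
    \<le> (\<integral>\<^sup>+th. (\<integral>\<^sup>+y. ennreal (D \<bar>betac y - beta th\<bar> - D 0) \<partial>P th) \<partial>pi)"
proof -
  let ?tail = "error_tail pi N P beta betac"
  have "(\<lambda>s. ennreal (D' s) * indicator {0..} s * ?tail s) \<in> borel_measurable borel"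
    using borel_measurable_derivative_on_nonneg[OF D']
      borel_measurable_error_tail[OF pi kernel beta betac, unfolded measurable_lborel2]
    by (rule borel_measurable_times_ennreal)
  then have integrand_meas: "(\<lambda>s. ennreal (D' s) * ?tail s * indicator {0..} s) \<in> borel_measurable borel"
    by (simp add: mult_ac)
  have "valley_fill g t \<le> ?tail (t/2)" if "0 \<le> t" for t
  proof (rule valley_fill_le_antimono)
    show "antimono (\<lambda>t. ?tail (t/2))"
      using antimono_error_tail[OF kernel beta betac] by (auto simp: antimono_def)
  qed (use g_le that in auto)
  then have "(1/2) * (\<integral>\<^sup>+t\<in>{0..}. ennreal (D' (t/2)) * valley_fill g t \<partial>lborel)
      \<le> (1/2) * (\<integral>\<^sup>+t\<in>{0..}. ennreal (D' (t/2)) * ?tail (t/2) \<partial>lborel)"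
    by (intro mult_left_mono nn_integral_mono) (auto simp: indicator_def intro: mult_left_mono)
  also have "\<dots> = (\<integral>\<^sup>+s\<in>{0..}. ennreal (D' s) * ?tail s \<partial>lborel)"
  proof -
    have half: "ennreal (1/2) = 1/2"
      by (metis divide_ennreal ennreal_1 ennreal_numeral zero_le_one zero_less_numeral)
    show ?thesis
      using nn_integral_atLeast_0_rescale[OF integrand_meas, of "1/2"] unfolding half by simp
  qed
  also have "\<dots> = (\<integral>\<^sup>+th. (\<integral>\<^sup>+y. ennreal (D \<bar>betac y - beta th\<bar> - D 0) \<partial>P th) \<partial>pi)"
    by (rule bayes_risk_layer_cake[OF pi kernel beta betac mono D', symmetric])
  finally show ?thesis .
qed

lemma min_err_prob_le:
  assumes "A \<in> sets N" "0 \<le> q" "q \<le> 1"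
  shows "min_err_prob N P th ph q \<le> q * measure (P th) A + (1 - q) * measure (P ph) (space N - A)"
  unfolding min_err_prob_def
proof (rule cINF_lower[OF _ assms(1)])
  show "bdd_below ((\<lambda>A. q * measure (P th) A + (1 - q) * measure (P ph) (space N - A)) ` sets N)"
    using assms(2,3) by (intro bdd_belowI[of _ 0]) auto
qed

lemma weighted_min_err_prob_le:
  assumes A: "A \<in> sets N" and u: "0 \<le> u" and v: "0 \<le> v"
  shows "(u + v) * min_err_prob N P th ph (u / (u + v))
    \<le> u * measure (P th) A + v * measure (P ph) (space N - A)"
proof (cases "u + v = 0")
  case True
  then show ?thesis
    using u v by simp
next
  case False
  then have uv: "0 < u + v"
    using u v by linarith
  have "(u + v) * min_err_prob N P th ph (u / (u + v))
      \<le> (u + v) * (u / (u + v) * measure (P th) A + (1 - u / (u + v)) * measure (P ph) (space N - A))"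
    using uv u v by (intro mult_left_mono min_err_prob_le[OF A]) auto
  also have "\<dots> = u * measure (P th) A + v * measure (P ph) (space N - A)"
  proof -
    have "(u + v) * (u / (u + v)) = u" "(u + v) * (1 - u / (u + v)) = v"
      using uv by (simp_all add: field_simps)
    then show ?thesis
      by (simp only: distrib_left mult.assoc[symmetric])
  qed
  finally show ?thesis .
qed

lemma equal_prior_min_err_prob_le:
  assumes A: "A \<in> sets N" and u: "0 \<le> u" and v: "0 \<le> v"
  shows "2 * min u v * min_err_prob N P th ph (1/2)
    \<le> u * measure (P th) A + v * measure (P ph) (space N - A)"
proof (cases "min u v = 0")
  case True
  then show ?thesis
    using u v by simp
next
  case False
  have "2 * min u v * min_err_prob N P th ph (1/2)
      \<le> min u v * measure (P th) A + min u v * measure (P ph) (space N - A)"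
    using weighted_min_err_prob_le[OF A, of "min u v" "min u v"] u v False by simp
  also have "\<dots> \<le> u * measure (P th) A + v * measure (P ph) (space N - A)"
    by (intro add_mono mult_right_mono) auto
  finally show ?thesis .
qed

lemma min_err_prob_threshold_test_le:
  fixes N :: "'b measure" and P :: "'a \<Rightarrow> 'b measure" and th ph :: 'a and betac :: "'b \<Rightarrow> real"
  assumes fin: "finite_measure (P th)" "finite_measure (P ph)" and sets_P: "sets (P ph) = sets N"
    and [measurable]: "betac \<in> borel_measurable N"
    and u: "0 \<le> u" and v: "0 \<le> v" and margin: "0 < v \<Longrightarrow> c \<le> c'"
  defines "R \<equiv> ennreal u * emeasure (P th) {y \<in> space N. c \<le> betac y}
    + ennreal v * emeasure (P ph) {y \<in> space N. betac y < c'}"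
  shows "ennreal ((u + v) * min_err_prob N P th ph (u / (u + v))) \<le> R"
    and "ennreal (min u v * min_err_prob N P th ph (1/2)) \<le> R / 2"
proof -
  define A where "A = {y \<in> space N. c \<le> betac y}"
  define r where "r = u * measure (P th) A + v * measure (P ph) {y \<in> space N. betac y < c'}"
  have A: "A \<in> sets N"
    unfolding A_def by measurable
  have "v * measure (P ph) (space N - A) \<le> v * measure (P ph) {y \<in> space N. betac y < c'}"
  proof (cases "v = 0")
    case False
    then have "space N - A \<subseteq> {y \<in> space N. betac y < c'}"
      using margin v by (auto simp: A_def)
    then show ?thesis
      using v fin(2) sets_P by (intro mult_left_mono finite_measure.finite_measure_mono) auto
  qed simp
  then have "(u + v) * min_err_prob N P th ph (u / (u + v)) \<le> r"
    and "2 * min u v * min_err_prob N P th ph (1/2) \<le> r"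
    using weighted_min_err_prob_le[OF A u v, where P = P and th = th and ph = ph]
      equal_prior_min_err_prob_le[OF A u v, where P = P and th = th and ph = ph]
    unfolding r_def by linarith+
  moreover have "0 \<le> r"
    unfolding r_def using u v by simp
  moreover have "R = ennreal r"
    unfolding R_def r_def A_def using u v
    by (simp add: finite_measure.emeasure_eq_measure[OF fin(1)] finite_measure.emeasure_eq_measure[OF fin(2)]
        ennreal_plus ennreal_mult)
  ultimately show "ennreal ((u + v) * min_err_prob N P th ph (u / (u + v))) \<le> R"
    and "ennreal (min u v * min_err_prob N P th ph (1/2)) \<le> R / 2"
    by (auto simp: ennreal_divide_numeral intro!: ennreal_leI)
qed

lemma emeasure_two_sided_tail_le:
  fixes g :: "'b \<Rightarrow> real"
  assumes sets_M: "sets M = sets N" and [measurable]: "g \<in> borel_measurable N" and s: "0 \<le> s"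
  shows "emeasure M {y \<in> space N. x + s \<le> g y} + emeasure M {y \<in> space N. g y < x - s}
    \<le> emeasure M {y \<in> space N. s \<le> \<bar>g y - x\<bar>}"
proof -
  have "emeasure M {y \<in> space N. x + s \<le> g y} + emeasure M {y \<in> space N. g y < x - s}
      = emeasure M ({y \<in> space N. x + s \<le> g y} \<union> {y \<in> space N. g y < x - s})"
    using s by (intro plus_emeasure) (auto simp: sets_M)
  also have "\<dots> \<le> emeasure M {y \<in> space N. s \<le> \<bar>g y - x\<bar>}"
    by (intro emeasure_mono) (auto simp: sets_M abs_if)
  finally show ?thesis .
qed

locale density_transport =
  fixes pi :: "'a measure" and Phi Phi' :: "'a set" and T :: "'a \<Rightarrow> 'a"
    and pit mu :: "'a measure" and f ft :: "'a \<Rightarrow> real"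
  assumes Phi_sets: "Phi \<in> sets pi" and Phi'_sets: "Phi' \<in> sets pi"
    and T_meas: "T \<in> measurable (restrict_space pi Phi) (restrict_space pi Phi')"
    and pit_sets: "sets pit = sets (restrict_space pi Phi)"
    and pushforward: "distr pit (restrict_space pi Phi') T = restrict_space pi Phi'"
    and mu_sets: "sets mu = sets (restrict_space pi Phi)"
    and f_meas: "f \<in> borel_measurable mu" and ft_meas: "ft \<in> borel_measurable mu"
    and f_density: "restrict_space pi Phi = density mu (\<lambda>th. ennreal (f th))"
    and ft_density: "pit = density mu (\<lambda>th. ennreal (ft th))"
begin

lemma space_mu: "space mu = Phi"
  using sets_eq_imp_space_eq[OF mu_sets] Phi_sets by (simp add: space_restrict_space)

lemma measurable_mu: "a \<in> borel_measurable pi \<Longrightarrow> a \<in> borel_measurable mu"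
  unfolding measurable_cong_sets[OF mu_sets refl] by (rule measurable_restrict_space1)

lemma measurable_transport_integrand:
  assumes a: "a \<in> borel_measurable pi" and b: "b \<in> borel_measurable pi"
  shows "(\<lambda>th. ennreal (f th) * a th + ennreal (ft th) * b (T th)) \<in> borel_measurable mu"
proof -
  have "T \<in> measurable mu (restrict_space pi Phi')"
    unfolding measurable_cong_sets[OF mu_sets refl] by (rule T_meas)
  then have [measurable]: "(\<lambda>th. b (T th)) \<in> borel_measurable mu"
    using measurable_restrict_space1[OF b] by (rule measurable_compose)
  show ?thesis
    using f_meas ft_meas measurable_mu[OF a] by measurable
qed

lemma nn_integral_transport:
  assumes a: "a \<in> borel_measurable pi" and b: "b \<in> borel_measurable pi"
  shows "(\<integral>\<^sup>+th. ennreal (f th) * a th + ennreal (ft th) * b (T th) \<partial>mu)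
    = (\<integral>\<^sup>+th\<in>Phi. a th \<partial>pi) + (\<integral>\<^sup>+th\<in>Phi'. b th \<partial>pi)"
proof -
  have [measurable]: "(\<lambda>th. ennreal (f th)) \<in> borel_measurable mu" "(\<lambda>th. ennreal (ft th)) \<in> borel_measurable mu"
    using f_meas ft_meas by measurable
  have b': "b \<in> borel_measurable (restrict_space pi Phi')"
    using b by (rule measurable_restrict_space1)
  have T_pit: "T \<in> measurable pit (restrict_space pi Phi')"
    unfolding measurable_cong_sets[OF pit_sets refl] by (rule T_meas)
  have "(\<integral>\<^sup>+th. ennreal (f th) * a th \<partial>mu) = (\<integral>\<^sup>+th. a th \<partial>density mu (\<lambda>th. ennreal (f th)))"
    using measurable_mu[OF a] by (simp add: nn_integral_density)
  also have "\<dots> = (\<integral>\<^sup>+th\<in>Phi. a th \<partial>pi)"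
    using Phi_sets by (simp flip: f_density add: nn_integral_restrict_space)
  finally have a_part: "(\<integral>\<^sup>+th. ennreal (f th) * a th \<partial>mu) = (\<integral>\<^sup>+th\<in>Phi. a th \<partial>pi)" .
  have "(\<integral>\<^sup>+th. ennreal (ft th) * b (T th) \<partial>mu) = (\<integral>\<^sup>+th. b (T th) \<partial>pit)"
    using measurable_compose[OF T_pit b'] unfolding ft_density by (simp add: nn_integral_density)
  also have "\<dots> = (\<integral>\<^sup>+th. b th \<partial>distr pit (restrict_space pi Phi') T)"
    by (rule nn_integral_distr[symmetric, OF T_pit]) (simp add: pushforward b')
  also have "\<dots> = (\<integral>\<^sup>+th\<in>Phi'. b th \<partial>pi)"
    using Phi'_sets by (simp add: pushforward nn_integral_restrict_space)
  finally have b_part: "(\<integral>\<^sup>+th. ennreal (ft th) * b (T th) \<partial>mu) = (\<integral>\<^sup>+th\<in>Phi'. b th \<partial>pi)" .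
  have "(\<lambda>th. b (T th)) \<in> borel_measurable mu"
    using measurable_compose[OF T_pit b'] unfolding measurable_cong_sets[OF pit_sets[folded mu_sets] refl] .
  then show ?thesis
    using measurable_mu[OF a] by (simp add: nn_integral_add a_part b_part)
qed

lemma nn_integral_split_tails_le_error_tail:
  fixes N :: "'b measure" and P :: "'a \<Rightarrow> 'b measure" and beta :: "'a \<Rightarrow> real" and betac :: "'b \<Rightarrow> real"
  assumes kernel: "P \<in> measurable pi (subprob_algebra N)"
    and [measurable]: "beta \<in> borel_measurable pi" "betac \<in> borel_measurable N" and s: "0 \<le> s"
  shows "(\<integral>\<^sup>+th. ennreal (f th) * emeasure (P th) {y \<in> space N. beta th + s \<le> betac y}
      + ennreal (ft th) * emeasure (P (T th)) {y \<in> space N. betac y < beta (T th) - s} \<partial>mu)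
    \<le> error_tail pi N P beta betac s"
proof -
  define upper where "upper th = emeasure (P th) {y \<in> space N. beta th + s \<le> betac y}" for th
  define lower where "lower th = emeasure (P th) {y \<in> space N. betac y < beta th - s}" for th
  have [measurable]: "upper \<in> borel_measurable pi"
    unfolding upper_def[abs_def] by (rule measurable_emeasure_kernel_section[OF kernel]) measurable
  have [measurable]: "lower \<in> borel_measurable pi"
    unfolding lower_def[abs_def] by (rule measurable_emeasure_kernel_section[OF kernel]) measurable
  have "(\<integral>\<^sup>+th. ennreal (f th) * upper th + ennreal (ft th) * lower (T th) \<partial>mu)
      = (\<integral>\<^sup>+th\<in>Phi. upper th \<partial>pi) + (\<integral>\<^sup>+th\<in>Phi'. lower th \<partial>pi)"
    by (rule nn_integral_transport) measurable
  also have "\<dots> \<le> (\<integral>\<^sup>+th. upper th \<partial>pi) + (\<integral>\<^sup>+th. lower th \<partial>pi)"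
    by (intro add_mono nn_integral_mono) (auto simp: indicator_def)
  also have "\<dots> = (\<integral>\<^sup>+th. upper th + lower th \<partial>pi)"
    by (simp add: nn_integral_add)
  also have "\<dots> \<le> error_tail pi N P beta betac s"
    unfolding error_tail_def upper_def lower_def
    by (intro nn_integral_mono emeasure_two_sided_tail_le[OF sets_kernel[OF kernel]] s) measurable
  finally show ?thesis
    by (simp add: upper_def lower_def)
qed

lemma two_point_bounds_le_error_tail:
  fixes N :: "'b measure" and P :: "'a \<Rightarrow> 'b measure" and beta :: "'a \<Rightarrow> real" and betac :: "'b \<Rightarrow> real"
  assumes kernel: "P \<in> measurable pi (subprob_algebra N)"
    and [measurable]: "beta \<in> borel_measurable pi" "betac \<in> borel_measurable N"
    and t: "0 \<le> t" and shift: "AE th in pit. beta th + t \<le> beta (T th)"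
    and f_nonneg: "\<And>th. th \<in> Phi \<Longrightarrow> 0 \<le> f th" and ft_nonneg: "\<And>th. th \<in> Phi \<Longrightarrow> 0 \<le> ft th"
  shows "(\<integral>\<^sup>+th\<in>Phi. ennreal ((f th + ft th) * min_err_prob N P th (T th) (f th / (f th + ft th))) \<partial>mu)
      \<le> error_tail pi N P beta betac (t/2)"
    and "2 * (\<integral>\<^sup>+th\<in>Phi. ennreal (min (f th) (ft th) * min_err_prob N P th (T th) (1/2)) \<partial>mu)
      \<le> error_tail pi N P beta betac (t/2)"
proof -
  define X where "X th = ennreal (f th) * emeasure (P th) {y \<in> space N. beta th + t/2 \<le> betac y}
    + ennreal (ft th) * emeasure (P (T th)) {y \<in> space N. betac y < beta (T th) - t/2}" for th
  have X_le: "integral\<^sup>N mu X \<le> error_tail pi N P beta betac (t/2)"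
    unfolding X_def using t by (intro nn_integral_split_tails_le_error_tail[OF kernel]) simp_all
  have X_meas: "X \<in> borel_measurable mu"
    unfolding X_def[abs_def] by (rule measurable_transport_integrand)
      (intro measurable_emeasure_kernel_section[OF kernel]; measurable)+
  have pointwise:
    "ennreal ((f th + ft th) * min_err_prob N P th (T th) (f th / (f th + ft th))) \<le> X th \<and>
     ennreal (min (f th) (ft th) * min_err_prob N P th (T th) (1/2)) \<le> X th / 2"
    if th: "th \<in> Phi" and shift_th: "0 < ft th \<longrightarrow> beta th + t \<le> beta (T th)" for th
  proof -
    have th_space: "th \<in> space pi"
      using sets.sets_into_space[OF Phi_sets] th by auto
    have Tth_space: "T th \<in> space pi"
      using measurable_space[OF T_meas, of th] th th_space by (simp add: space_restrict_space)
    have "0 < ft th \<Longrightarrow> beta th + t/2 \<le> beta (T th) - t/2"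
      using shift_th by auto
    note bounds = min_err_prob_threshold_test_le[where P = P and th = th and ph = "T th",
        OF subprob_space_kernel[OF kernel th_space, THEN subprob_space.axioms(1)]
        subprob_space_kernel[OF kernel Tth_space, THEN subprob_space.axioms(1)]
        sets_kernel[OF kernel Tth_space] \<open>betac \<in> borel_measurable N\<close> f_nonneg[OF th] ft_nonneg[OF th] this]
    show ?thesis
      unfolding X_def using bounds by blast
  qed
  have "AE th in mu. 0 < ft th \<longrightarrow> beta th + t \<le> beta (T th)"
    using shift ft_meas unfolding ft_density by (subst (asm) AE_density) auto
  then have AE: "AE th in mu. th \<in> Phi \<and> (0 < ft th \<longrightarrow> beta th + t \<le> beta (T th))"
    using AE_space[of mu] unfolding space_mu by eventually_elim simp
  have "(\<integral>\<^sup>+th\<in>Phi. ennreal ((f th + ft th) * min_err_prob N P th (T th) (f th / (f th + ft th))) \<partial>mu)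
      \<le> integral\<^sup>N mu X"
    by (rule nn_integral_mono_AE, use AE in eventually_elim) (auto dest: pointwise)
  then show "(\<integral>\<^sup>+th\<in>Phi. ennreal ((f th + ft th) * min_err_prob N P th (T th) (f th / (f th + ft th))) \<partial>mu)
      \<le> error_tail pi N P beta betac (t/2)"
    using X_le by (rule order_trans)
  have "2 * (\<integral>\<^sup>+th\<in>Phi. ennreal (min (f th) (ft th) * min_err_prob N P th (T th) (1/2)) \<partial>mu)
      \<le> integral\<^sup>N mu X"
    by (rule double_nn_integral_le[OF X_meas], use AE in eventually_elim) (auto dest: pointwise)
  then show "2 * (\<integral>\<^sup>+th\<in>Phi. ennreal (min (f th) (ft th) * min_err_prob N P th (T th) (1/2)) \<partial>mu)
      \<le> error_tail pi N P beta betac (t/2)"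
    using X_le by (rule order_trans)
qed

end

theorem theorem1:
  fixes pi :: "'a measure" and N :: "'b measure"
    and P :: "'a \<Rightarrow> 'b measure"
    and beta :: "'a \<Rightarrow> real" and betac :: "'b \<Rightarrow> real"
    and D D' :: "real \<Rightarrow> real"
    and Phi Phi' :: "real \<Rightarrow> 'a set"
    and T :: "real \<Rightarrow> 'a \<Rightarrow> 'a"
    and pit mu :: "real \<Rightarrow> 'a measure"
    and f ft :: "real \<Rightarrow> 'a \<Rightarrow> real"
  assumes borel_Theta: "borel_space pi"
    and borel_Y: "borel_space N"
    and prior: "prob_space pi"
    and kernel: "P \<in> measurable pi (subprob_algebra N)"
    and kernel_prob: "\<And>th. th \<in> space pi \<Longrightarrow> prob_space (P th)"
    and beta_meas: "beta \<in> borel_measurable pi"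
    and betac_meas: "betac \<in> borel_measurable N"
    and D_nonneg: "\<And>x. x \<ge> 0 \<Longrightarrow> D x \<ge> 0"
    and D_mono: "\<And>x y. 0 \<le> y \<Longrightarrow> y \<le> x \<Longrightarrow> D y \<le> D x"
    and D_0: "D 0 = 0"
    and D_deriv: "\<And>x. x \<ge> 0 \<Longrightarrow> (D has_real_derivative D' x) (at x within {0..})"
    and Phi_sets: "\<And>t. t \<ge> 0 \<Longrightarrow> Phi t \<in> sets pi"
    and Phi'_sets: "\<And>t. t \<ge> 0 \<Longrightarrow> Phi' t \<in> sets pi"
    and T_meas: "\<And>t. t \<ge> 0 \<Longrightarrow>
        T t \<in> measurable (restrict_space pi (Phi t)) (restrict_space pi (Phi' t))"
    and pit_sets: "\<And>t. t \<ge> 0 \<Longrightarrow> sets (pit t) = sets (restrict_space pi (Phi t))"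
    and pushforward: "\<And>t. t \<ge> 0 \<Longrightarrow>
        distr (pit t) (restrict_space pi (Phi' t)) (T t) = restrict_space pi (Phi' t)"
    and shift: "\<And>t. t \<ge> 0 \<Longrightarrow> AE th in pit t. beta (T t th) \<ge> beta th + t"
    and mu_sets: "\<And>t. t \<ge> 0 \<Longrightarrow> sets (mu t) = sets (restrict_space pi (Phi t))"
    and f_meas: "\<And>t. t \<ge> 0 \<Longrightarrow> f t \<in> borel_measurable (mu t)"
    and ft_meas: "\<And>t. t \<ge> 0 \<Longrightarrow> ft t \<in> borel_measurable (mu t)"
    and f_nonneg: "\<And>t th. t \<ge> 0 \<Longrightarrow> th \<in> Phi t \<Longrightarrow> f t th \<ge> 0"
    and ft_nonneg: "\<And>t th. t \<ge> 0 \<Longrightarrow> th \<in> Phi t \<Longrightarrow> ft t th \<ge> 0"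
    and f_density: "\<And>t. t \<ge> 0 \<Longrightarrow>
        restrict_space pi (Phi t) = density (mu t) (\<lambda>th. ennreal (f t th))"
    and ft_density: "\<And>t. t \<ge> 0 \<Longrightarrow>
        pit t = density (mu t) (\<lambda>th. ennreal (ft t th))"
  defines "E \<equiv> (\<integral>\<^sup>+ th. (\<integral>\<^sup>+ y. ennreal (D \<bar>betac y - beta th\<bar>) \<partial>P th) \<partial>pi)"
    and "Z1 \<equiv> (1/2) * (\<integral>\<^sup>+ t \<in> {0..}. ennreal (D' (t/2)) * valley_fill
        (\<lambda>t. \<integral>\<^sup>+ th \<in> Phi t. ennreal ((f t th + ft t th) *
              min_err_prob N P th (T t th) (f t th / (f t th + ft t th))) \<partial>mu t)
        t \<partial>lborel)"
    and "Z2 \<equiv> (1/2) * (\<integral>\<^sup>+ t \<in> {0..}. ennreal (D' (t/2)) * valley_fill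
        (\<lambda>t. 2 * (\<integral>\<^sup>+ th \<in> Phi t. ennreal (min (f t th) (ft t th) *
              min_err_prob N P th (T t th) (1/2)) \<partial>mu t))
        t \<partial>lborel)"
  shows "E \<ge> Z1 \<and> E \<ge> Z2"
proof -
  have mono: "mono_on {0..} D"
    using D_mono by (auto intro: mono_onI)
  have sigma_pi: "sigma_finite_measure pi"
    using prior by (rule prob_space_imp_sigma_finite)
  define g1 where "g1 = (\<lambda>t. \<integral>\<^sup>+th\<in>Phi t. ennreal ((f t th + ft t th) *
    min_err_prob N P th (T t th) (f t th / (f t th + ft t th))) \<partial>mu t)"
  define g2 where "g2 = (\<lambda>t. 2 * (\<integral>\<^sup>+th\<in>Phi t. ennreal (min (f t th) (ft t th) *
    min_err_prob N P th (T t th) (1/2)) \<partial>mu t))"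
  have g_le: "g1 t \<le> error_tail pi N P beta betac (t/2) \<and> g2 t \<le> error_tail pi N P beta betac (t/2)"
    if t: "0 \<le> t" for t
  proof -
    interpret density_transport pi "Phi t" "Phi' t" "T t" "pit t" "mu t" "f t" "ft t"
      by unfold_locales (fact Phi_sets[OF t] Phi'_sets[OF t] T_meas[OF t] pit_sets[OF t]
          pushforward[OF t] mu_sets[OF t] f_meas[OF t] ft_meas[OF t] f_density[OF t] ft_density[OF t])+
    show ?thesis
      using two_point_bounds_le_error_tail[OF kernel beta_meas betac_meas t shift[OF t]
          f_nonneg[OF t] ft_nonneg[OF t]]
      unfolding g1_def g2_def by simp
  qed
  note valley_fill_bound = bayes_risk_ge_valley_fill[OF sigma_pi kernel beta_meas betac_meas mono D_deriv]
  have "Z1 \<le> E"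
    unfolding Z1_def g1_def[symmetric] using g_le valley_fill_bound[of g1] by (simp add: E_def D_0)
  moreover have "Z2 \<le> E"
    unfolding Z2_def g2_def[symmetric] using g_le valley_fill_bound[of g2] by (simp add: E_def D_0)
  ultimately show ?thesis
    by simp
qed

end
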